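(* Let $n\ge 3$ with $n\equiv 1$ or $3 \pmod 6$, and let $S_n$ be a Steiner latin square of order $n$. Then $$t(S_n)\ \ge\ \frac{6^{\lceil (n-1)/6\rceil-1}\,\lfloor n/3\rfloor!}{\lceil (n-1)/6\rceil!\,\lceil (n-1)/6\rceil}.$$
   Context: A latin square of order $n$ is an $n\times n$ array with entries from $\{0,1,\dots,n-1\}$ in which each symbol occurs exactly once in each row and each column; it is identified with the set of ordered triples $(r,c,s)$ meaning symbol $s$ is in row $r$, column $c$. A transversal of a latin square is a set of $n$ entries containing exactly one entry from each row and each column and in which no symbol is repeated. $t(A)$ denotes the number of transversals of the latin square $A$. A Steiner triple system (STS) on an $n$-element set $X$ is a set of $3$-element subsets of $X$ such that every $2$-element subset of $X$ lies in exactly one of them. The Steiner latin square of an STS on $X=\{0,\dots,n-1\}$ is the latin square consisting of the triples $(a,a,a)$ for all $a\in X$ together with all six ordered triples $(x,y,z)$ obtained by ordering each triple $\{x,y,z\}$ of the STS; i.e. the entry in row $x$, column $y$ is $x$ if $x=y$, and otherwise is the third element of the unique STS triple containing $x$ and $y$. A Steiner latin square of order $n$ is one arising in this way from some STS of order $n$. *)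

theory Defs
  imports Complex_Main
begin

definition latin_square :: "nat \<Rightarrow> (nat \<times> nat \<times> nat) set \<Rightarrow> bool" where
  "latin_square n L \<longleftrightarrow> L \<subseteq> {0..<n} \<times> {0..<n} \<times> {0..<n} \<and>
     (\<forall>r\<in>{0..<n}. \<forall>c\<in>{0..<n}. \<exists>!s. (r, c, s) \<in> L) \<and>
     (\<forall>r\<in>{0..<n}. \<forall>s\<in>{0..<n}. \<exists>!c. (r, c, s) \<in> L) \<and>
     (\<forall>c\<in>{0..<n}. \<forall>s\<in>{0..<n}. \<exists>!r. (r, c, s) \<in> L)"

definition transversal :: "nat \<Rightarrow> (nat \<times> nat \<times> nat) set \<Rightarrow> (nat \<times> nat \<times> nat) set \<Rightarrow> bool" where
  "transversal n L T \<longleftrightarrow> T \<subseteq> L \<and> card T = n \<and>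
     (\<lambda>(r, c, s). r) ` T = {0..<n} \<and>
     (\<lambda>(r, c, s). c) ` T = {0..<n} \<and>
     inj_on (\<lambda>(r, c, s). s) T"

definition num_transversals :: "nat \<Rightarrow> (nat \<times> nat \<times> nat) set \<Rightarrow> nat" where
  "num_transversals n L = card {T. transversal n L T}"

definition steiner_triple_system :: "nat \<Rightarrow> nat set set \<Rightarrow> bool" where
  "steiner_triple_system n B \<longleftrightarrow>
     (\<forall>b\<in>B. b \<subseteq> {0..<n} \<and> card b = 3) \<and>
     (\<forall>x\<in>{0..<n}. \<forall>y\<in>{0..<n}. x \<noteq> y \<longrightarrow> (\<exists>!b. b \<in> B \<and> {x, y} \<subseteq> b))"

definition steiner_latin_square :: "nat \<Rightarrow> nat set set \<Rightarrow> (nat \<times> nat \<times> nat) set" where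
  "steiner_latin_square n B =
     {(a, a, a) | a. a \<in> {0..<n}} \<union>
     {(x, y, z) | x y z. {x, y, z} \<in> B \<and> x \<noteq> y \<and> y \<noteq> z \<and> x \<noteq> z}"

definition is_steiner_latin_square :: "nat \<Rightarrow> (nat \<times> nat \<times> nat) set \<Rightarrow> bool" where
  "is_steiner_latin_square n L \<longleftrightarrow> (\<exists>B. steiner_triple_system n B \<and> L = steiner_latin_square n B)"

end

theory Submission
  imports Defs "HOL-Combinatorics.Multiset_Permutations"
begin

text \<open>
  For an ordered block \<open>(x, y, z)\<close> of the Steiner triple system, its rotation class
  \<open>{(x, y, z), (y, z, x), (z, x, y)}\<close> uses each of \<open>x, y, z\<close> exactly once as row, column and
  symbol. So any family of rotation classes with pairwise disjoint supports, completed by the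
  diagonal entries \<open>(a, a, a)\<close> on the uncovered points, is a transversal of the Steiner
  latin square. Choosing the classes one after the other, with \<open>3i\<close> points covered there are
  at least \<open>(n - 3i)(n - 6i - 1)/3\<close> classes avoiding them, while a transversal arises from at
  most \<open>k!\<close> orderings of its \<open>k\<close> classes. With \<open>j = n div 6\<close> classes this gives
  \<open>t(S) \<ge> 6^j (n div 3)! / (n div 3 - j)!\<close>, and \<open>n div 3 - j\<close> is the ceiling in the bound.
\<close>

fun rotation_class :: "'a \<times> 'a \<times> 'a \<Rightarrow> ('a \<times> 'a \<times> 'a) set" where
  "rotation_class (x, y, z) = {(x, y, z), (y, z, x), (z, x, y)}"

lemma rotation_class_self: "t \<in> rotation_class t"
  by (cases t) simp

lemma rotation_class_eq: "t' \<in> rotation_class t \<Longrightarrow> rotation_class t' = rotation_class t"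
  by (cases t) auto

lemma finite_rotation_class: "finite (rotation_class t)"
  by (cases t) simp

lemma card_rotation_classes:
  assumes "finite A" and closed: "\<And>t. t \<in> A \<Longrightarrow> rotation_class t \<subseteq> A"
    and distinct: "\<And>x y z. (x, y, z) \<in> A \<Longrightarrow> x \<noteq> y \<and> y \<noteq> z \<and> x \<noteq> z"
  shows "card A = 3 * card (rotation_class ` A)"
proof -
  have "A = \<Union>(rotation_class ` A)"
    using closed rotation_class_self by blast
  moreover have "pairwise disjnt (rotation_class ` A)"
    unfolding pairwise_def disjnt_def by (metis rotation_class_eq disjoint_iff imageE)
  moreover have "finite C" if "C \<in> rotation_class ` A" for C
    using that finite_rotation_class by blast
  ultimately have "card A = (\<Sum>C\<in>rotation_class ` A. card C)"
    by (metis card_Union_disjoint)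
  also have "\<dots> = (\<Sum>C\<in>rotation_class ` A. 3)"
  proof (rule sum.cong)
    fix C assume "C \<in> rotation_class ` A"
    then obtain x y z where "(x, y, z) \<in> A" "C = rotation_class (x, y, z)"
      by (metis imageE prod_cases3)
    then show "card C = 3" using distinct by auto
  qed simp
  finally show ?thesis by simp
qed

definition block_triples :: "nat set set \<Rightarrow> (nat \<times> nat \<times> nat) set" where
  "block_triples B = {(x, y, z) | x y z. {x, y, z} \<in> B \<and> x \<noteq> y \<and> y \<noteq> z \<and> x \<noteq> z}"

lemma steiner_latin_square_eq:
  "steiner_latin_square n B = (\<lambda>a. (a, a, a)) ` {0..<n} \<union> block_triples B"
  by (auto simp: steiner_latin_square_def block_triples_def)

lemma block_triples_permute:
  assumes "(x, y, z) \<in> block_triples B"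
  shows "(y, z, x) \<in> block_triples B" "(x, z, y) \<in> block_triples B"
proof -
  have "{y, z, x} = {x, y, z}" "{x, z, y} = {x, y, z}" by auto
  then show "(y, z, x) \<in> block_triples B" "(x, z, y) \<in> block_triples B"
    using assms by (auto simp: block_triples_def)
qed

lemma block_triples_distinct: "(x, y, z) \<in> block_triples B \<Longrightarrow> x \<noteq> y \<and> y \<noteq> z \<and> x \<noteq> z"
  by (auto simp: block_triples_def)

lemma rotation_class_block_triples: "t \<in> block_triples B \<Longrightarrow> rotation_class t \<subseteq> block_triples B"
  by (cases t) (metis block_triples_permute(1) empty_subsetI insert_subset rotation_class.simps)

lemma prod_diff_mult_fact: "j \<le> d \<Longrightarrow> (\<Prod>i<j. d - i) * fact (d - j) = (fact d :: nat)"
proof (induction j)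
  case (Suc j)
  then have "d - j = Suc (d - Suc j)" by arith
  then have "fact (d - j) = (d - j) * (fact (d - Suc j) :: nat)"
    by (metis fact_Suc of_nat_id)
  then have "(\<Prod>i<Suc j. d - i) * fact (d - Suc j) = (\<Prod>i<j. d - i) * fact (d - j)"
    by (simp add: mult.assoc)
  with Suc show ?case by simp
qed simp

lemma prod_ge_fact_ratio:
  fixes n j :: nat
  assumes "6 * j + 1 \<le> n"
  shows "18 ^ j * fact j * fact (n div 3)
    \<le> (\<Prod>i<j. (n - 3 * i) * (n - 6 * i - 1)) * fact (n div 3 - j)"
proof -
  let ?d = "n div 3"
  have "j \<le> ?d" using assms by linarith
  have "3 * (?d - i) * (6 * (j - i)) \<le> (n - 3 * i) * (n - 6 * i - 1)" if "i < j" for i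
  proof (rule mult_le_mono)
    show "3 * (?d - i) \<le> n - 3 * i" "6 * (j - i) \<le> n - 6 * i - 1"
      using assms that by auto
  qed
  then have "(\<Prod>i<j. 3 * (?d - i) * (6 * (j - i))) \<le> (\<Prod>i<j. (n - 3 * i) * (n - 6 * i - 1))"
    by (intro prod_mono) simp
  moreover have "(\<Prod>i<j. 3 * (?d - i) * (6 * (j - i)))
      = 18 ^ j * (\<Prod>i<j. ?d - i) * (\<Prod>i<j. j - i)"
    by (simp add: prod.distrib power_mult_distrib)
  moreover have "(\<Prod>i<j. j - i) = fact j"
    using prod_diff_mult_fact[of j j] by simp
  ultimately have "18 ^ j * fact j * ((\<Prod>i<j. ?d - i) * fact (?d - j))
      \<le> (\<Prod>i<j. (n - 3 * i) * (n - 6 * i - 1)) * fact (?d - j)"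
    by (metis (no_types, lifting) mult.assoc mult.commute mult_le_mono1)
  then show ?thesis
    using prod_diff_mult_fact[OF \<open>j \<le> ?d\<close>] by simp
qed

lemma ceiling_sixth_eq:
  fixes n :: nat
  assumes "n \<ge> 3" "n mod 6 = 1 \<or> n mod 6 = 3"
  shows "nat \<lceil>(real n - 1) / 6\<rceil> = n div 3 - n div 6"
    and "1 \<le> n div 3 - n div 6" "n div 3 - n div 6 \<le> n div 6 + 1" "6 * (n div 6) + 1 \<le> n"
proof -
  define j where "j = n div 6"
  have "nat \<lceil>(real n - 1) / 6\<rceil> = n div 3 - j \<and> 1 \<le> n div 3 - j
      \<and> n div 3 - j \<le> j + 1 \<and> 6 * j + 1 \<le> n"
  proof (cases "n mod 6 = 1")
    case True
    then have n: "n = 6 * j + 1"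
      unfolding j_def by presburger
    then have "n div 3 = 2 * j"
      by presburger
    with n assms(1) show ?thesis
      by simp
  next
    case False
    then have n: "n = 6 * j + 3"
      using assms(2) unfolding j_def by presburger
    then have "\<lceil>(real n - 1) / 6\<rceil> = int (j + 1)"
      by (simp add: ceiling_eq_iff field_simps)
    moreover have "n div 3 = 2 * j + 1"
      using n by presburger
    ultimately show ?thesis
      using n by simp
  qed
  then show "nat \<lceil>(real n - 1) / 6\<rceil> = n div 3 - n div 6"
    and "1 \<le> n div 3 - n div 6" "n div 3 - n div 6 \<le> n div 6 + 1" "6 * (n div 6) + 1 \<le> n"
    unfolding j_def by blast+
qed

lemma power_fact_div_le:
  fixes t d j m :: nat
  assumes "6 ^ j * fact d \<le> fact m * t" "1 \<le> m" "m \<le> j + 1"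
  shows "6 ^ (m - 1) * fact d / (fact m * real m) \<le> real t"
proof -
  have "(6::real) ^ (m - 1) \<le> 6 ^ j"
    using assms(3) by (intro power_increasing) simp_all
  then have "6 ^ (m - 1) * fact d / (fact m * real m) \<le> 6 ^ j * fact d / (fact m :: real)"
    using assms(2) by (intro frac_le mult_right_mono) simp_all
  also have "\<dots> \<le> real t"
  proof -
    have "real (6 ^ j * fact d) \<le> real (fact m * t)"
      using assms(1) by (rule of_nat_mono)
    then show ?thesis
      by (simp add: divide_le_eq mult.commute)
  qed
  finally show ?thesis .
qed

locale steiner_system =
  fixes n :: nat and B :: "nat set set"
  assumes steiner: "steiner_triple_system n B"
begin

lemma block: "b \<in> B \<Longrightarrow> b \<subseteq> {0..<n} \<and> card b = 3"
  using steiner by (auto simp: steiner_triple_system_def)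

lemma unique_block: "x < n \<Longrightarrow> y < n \<Longrightarrow> x \<noteq> y \<Longrightarrow> \<exists>!b. b \<in> B \<and> {x, y} \<subseteq> b"
  using steiner by (auto simp: steiner_triple_system_def)

lemma block_triples_range: "(x, y, z) \<in> block_triples B \<Longrightarrow> x < n \<and> y < n \<and> z < n"
  using block by (fastforce simp: block_triples_def)

lemma block_triples_third_unique:
  assumes "(x, y, z) \<in> block_triples B" "(x, y, z') \<in> block_triples B"
  shows "z = z'"
proof -
  have "x < n" "y < n" "x \<noteq> y"
    using assms(1) block_triples_range block_triples_distinct by auto
  then have "\<exists>!b. b \<in> B \<and> {x, y} \<subseteq> b"
    by (rule unique_block)
  moreover have "{x, y, z} \<in> B" "{x, y, z'} \<in> B" "z' \<noteq> x" "z' \<noteq> y"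
    using assms by (auto simp: block_triples_def)
  ultimately have "z' \<in> {x, y, z}" by blast
  then show ?thesis using \<open>z' \<noteq> x\<close> \<open>z' \<noteq> y\<close> by auto
qed

lemma block_triples_exists:
  assumes "x < n" "y < n" "x \<noteq> y"
  shows "\<exists>z. (x, y, z) \<in> block_triples B"
proof -
  obtain b where b: "b \<in> B" "{x, y} \<subseteq> b"
    using unique_block[OF assms] by blast
  then have "card (b - {x, y}) = 1"
    using block[OF b(1)] assms(3) by (simp add: card_Diff_subset finite_subset)
  then obtain z where "b - {x, y} = {z}" by (rule card_1_singletonE)
  then have "b = {x, y, z}" "z \<noteq> x" "z \<noteq> y" using b(2) by auto
  then show ?thesis using b(1) assms(3) by (auto simp: block_triples_def)
qed

lemma finite_block_triples: "finite (block_triples B)"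
  by (rule finite_subset[of _ "{0..<n} \<times> {0..<n} \<times> {0..<n}"]) (auto dest: block_triples_range)

definition classes :: "(nat \<times> nat \<times> nat) set set" where
  "classes = rotation_class ` block_triples B"

definition support :: "(nat \<times> nat \<times> nat) set \<Rightarrow> nat set" where
  "support C = (\<lambda>(r, c, s). r) ` C"

lemma finite_classes: "finite classes"
  unfolding classes_def using finite_block_triples by simp

lemma classes_subset: "C \<in> classes \<Longrightarrow> C \<subseteq> block_triples B"
  unfolding classes_def using rotation_class_block_triples by blast

lemma support_classes:
  assumes "C \<in> classes"
  shows "card (support C) = 3" "support C \<subseteq> {0..<n}"
proof -
  obtain x y z where t: "(x, y, z) \<in> block_triples B" "C = rotation_class (x, y, z)"
    using assms by (auto simp: classes_def)
  then have "support C = {x, y, z}"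
    by (auto simp: support_def)
  then show "card (support C) = 3" "support C \<subseteq> {0..<n}"
    using block_triples_distinct[OF t(1)] block_triples_range[OF t(1)] by auto
qed

text \<open>Abstracts the row, column and symbol projections, so that the transversal conditions
  are proved once.\<close>

definition good_projection :: "(nat \<times> nat \<times> nat \<Rightarrow> nat) \<Rightarrow> bool" where
  "good_projection p \<longleftrightarrow> (\<forall>a. p (a, a, a) = a) \<and>
     (\<forall>C\<in>classes. p ` C = support C \<and> inj_on p C)"

lemma good_projections:
  "good_projection (\<lambda>(r, c, s). r)" "good_projection (\<lambda>(r, c, s). c)"
  "good_projection (\<lambda>(r, c, s). s)"
  by (auto simp: good_projection_def classes_def support_def
      dest: block_triples_distinct)

definition covered :: "(nat \<times> nat \<times> nat) set list \<Rightarrow> nat set" where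
  "covered cs = \<Union>(support ` set cs)"

fun packing :: "(nat \<times> nat \<times> nat) set list \<Rightarrow> bool" where
  "packing [] = True"
| "packing (C # cs) \<longleftrightarrow> C \<in> classes \<and> support C \<inter> covered cs = {} \<and> packing cs"

lemma packing_props:
  assumes "packing cs"
  shows "card (covered cs) = 3 * length cs" "covered cs \<subseteq> {0..<n}" "distinct cs"
    "set cs \<subseteq> classes"
proof -
  have "card (covered cs) = 3 * length cs \<and> covered cs \<subseteq> {0..<n} \<and> distinct cs
      \<and> set cs \<subseteq> classes"
    using assms
  proof (induction cs)
    case (Cons C cs)
    then have C: "C \<in> classes" "support C \<inter> covered cs = {}" "finite (covered cs)"
      using finite_subset by auto
    have "C \<notin> set cs"
    proof
      assume "C \<in> set cs"
      then have "support C \<subseteq> covered cs" by (auto simp: covered_def)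
      then have "support C = {}" using C(2) by blast
      then show False using support_classes(1)[OF C(1)] by simp
    qed
    moreover have "finite (support C)"
      using support_classes(2)[OF C(1)] finite_subset by blast
    ultimately show ?case
      using Cons C support_classes by (auto simp: covered_def card_Un_disjoint)
  qed (simp add: covered_def)
  then show "card (covered cs) = 3 * length cs" "covered cs \<subseteq> {0..<n}" "distinct cs"
    "set cs \<subseteq> classes"
    by simp_all
qed

lemma packing_disjoint:
  "packing cs \<Longrightarrow> C \<in> set cs \<Longrightarrow> C' \<in> set cs \<Longrightarrow> C \<noteq> C' \<Longrightarrow> support C \<inter> support C' = {}"
  by (induction cs) (auto simp: covered_def)

definition transversal_of :: "(nat \<times> nat \<times> nat) set list \<Rightarrow> (nat \<times> nat \<times> nat) set" where
  "transversal_of cs = (\<lambda>a. (a, a, a)) ` ({0..<n} - covered cs) \<union> \<Union>(set cs)"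

lemma good_projection_transversal_of:
  assumes p: "good_projection p" and "packing cs"
  shows "p ` transversal_of cs = {0..<n}" "inj_on p (transversal_of cs)"
proof -
  let ?D = "(\<lambda>a. (a, a, a)) ` ({0..<n} - covered cs)"
  have cs: "set cs \<subseteq> classes" "covered cs \<subseteq> {0..<n}"
    using packing_props[OF \<open>packing cs\<close>] by auto
  then have bij: "\<And>C. C \<in> set cs \<Longrightarrow> p ` C = support C \<and> inj_on p C"
    using p cs(1) unfolding good_projection_def by blast
  have pD: "p ` ?D = {0..<n} - covered cs" and "inj_on p ?D"
    using p by (auto simp: good_projection_def image_image inj_on_def)
  have pU: "p ` \<Union>(set cs) = covered cs"
    unfolding covered_def image_Union using bij by (intro SUP_cong) auto
  show "p ` transversal_of cs = {0..<n}"
    unfolding transversal_of_def image_Un pD pU using cs(2) by blast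
  have "inj_on p (\<Union>(set cs))"
  proof (rule inj_onI)
    fix s t assume "s \<in> \<Union>(set cs)" "t \<in> \<Union>(set cs)" "p s = p t"
    then obtain C C' where C: "C \<in> set cs" "s \<in> C" and C': "C' \<in> set cs" "t \<in> C'"
      by blast
    have "p s \<in> support C" "p t \<in> support C'"
      using imageI[OF C(2), of p] imageI[OF C'(2), of p] bij[OF C(1)] bij[OF C'(1)] by simp_all
    then have "C = C'"
      using packing_disjoint[OF \<open>packing cs\<close> C(1) C'(1)] \<open>p s = p t\<close> by auto
    then show "s = t"
      using bij[OF C(1)] C(2) C'(2) \<open>p s = p t\<close> by (metis inj_onD)
  qed
  moreover have "p ` ?D \<inter> p ` \<Union>(set cs) = {}"
    unfolding pD pU by blast
  ultimately show "inj_on p (transversal_of cs)"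
    using \<open>inj_on p ?D\<close> unfolding transversal_of_def inj_on_Un by blast
qed

lemma transversal_transversal_of:
  assumes "packing cs"
  shows "transversal n (steiner_latin_square n B) (transversal_of cs)"
proof -
  note proj = good_projection_transversal_of[OF _ assms]
  have "\<Union>(set cs) \<subseteq> block_triples B"
    using packing_props(4)[OF assms] classes_subset by blast
  then have "transversal_of cs \<subseteq> steiner_latin_square n B"
    unfolding transversal_of_def steiner_latin_square_eq by blast
  moreover have "card (transversal_of cs) = n"
    using card_image[OF proj(2)[OF good_projections(1)]] proj(1)[OF good_projections(1)] by simp
  ultimately show ?thesis
    using proj good_projections by (simp add: transversal_def)
qed

lemma set_eq_if_transversal_of_eq:
  assumes "packing cs" "packing ds" "transversal_of cs = transversal_of ds"
  shows "set cs = set ds"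
proof -
  have "set cs = rotation_class ` (transversal_of cs - range (\<lambda>a. (a, a, a)))"
    if "packing cs" for cs
  proof -
    have "set cs \<subseteq> rotation_class ` block_triples B"
      using packing_props(4)[OF that] by (auto simp: classes_def)
    then have classes: "\<And>C t. C \<in> set cs \<Longrightarrow> t \<in> C \<Longrightarrow> rotation_class t = C"
      using rotation_class_eq by blast
    have "\<Union>(set cs) = transversal_of cs - range (\<lambda>a. (a, a, a))"
      using packing_props(4)[OF that] classes_subset block_triples_distinct
      by (fastforce simp: transversal_of_def)
    moreover have "set cs = rotation_class ` \<Union>(set cs)"
    proof (intro equalityI subsetI)
      fix C assume "C \<in> set cs"
      moreover from this obtain t where "C = rotation_class t"
        using \<open>set cs \<subseteq> rotation_class ` block_triples B\<close> by blast
      ultimately show "C \<in> rotation_class ` \<Union>(set cs)"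
        using rotation_class_self by blast
    qed (use classes in blast)
    ultimately show ?thesis by simp
  qed
  then show ?thesis using assms by metis
qed

text \<open>The first and third point of an ordered block determine the second.\<close>

lemma card_block_triples_first_third:
  assumes "finite Y" "finite X"
  shows "card {(x, y, z) \<in> block_triples B. x \<in> Y \<and> z \<in> X} \<le> card Y * card X"
proof -
  let ?R = "{(x, y, z) \<in> block_triples B. x \<in> Y \<and> z \<in> X}"
  have "inj_on (\<lambda>(x, y, z). (x, z)) ?R"
  proof (rule inj_onI)
    fix s t assume "s \<in> ?R" "t \<in> ?R" "(\<lambda>(x, y, z). (x, z)) s = (\<lambda>(x, y, z). (x, z)) t"
    then obtain x y y' z where st: "s = (x, y, z)" "t = (x, y', z)"
      "(x, y, z) \<in> block_triples B" "(x, y', z) \<in> block_triples B"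
      by auto
    then have "y = y'"
      using block_triples_third_unique block_triples_permute(2) by blast
    then show "s = t" using st by simp
  qed
  moreover have "(\<lambda>(x, y, z). (x, z)) ` ?R \<subseteq> Y \<times> X"
    by auto
  then have "card ((\<lambda>(x, y, z). (x, z)) ` ?R) \<le> card (Y \<times> X)"
    using assms by (intro card_mono) simp_all
  ultimately show ?thesis by (simp add: card_image card_cartesian_product)
qed

lemma card_block_triples_within:
  "card (block_triples B \<inter> Y \<times> Y \<times> Y) \<le> 3 * card {C \<in> classes. support C \<subseteq> Y}"
proof -
  let ?A = "block_triples B \<inter> Y \<times> Y \<times> Y"
  have "card ?A = 3 * card (rotation_class ` ?A)"
  proof (rule card_rotation_classes)
    show "finite ?A" using finite_block_triples by simp
  next
    fix t assume "t \<in> ?A"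
    then show "rotation_class t \<subseteq> ?A"
      using rotation_class_block_triples[of t] by (cases t) auto
  next
    show "x \<noteq> y \<and> y \<noteq> z \<and> x \<noteq> z" if "(x, y, z) \<in> ?A" for x y z
      using that block_triples_distinct by blast
  qed
  moreover have "rotation_class ` ?A \<subseteq> {C \<in> classes. support C \<subseteq> Y}"
    by (auto simp: classes_def support_def)
  ultimately show ?thesis
    using finite_classes by (simp add: card_mono)
qed

lemma card_classes_avoiding:
  assumes "X \<subseteq> {0..<n}"
  shows "(n - card X) * (n - 2 * card X - 1) \<le> 3 * card {C \<in> classes. support C \<inter> X = {}}"
proof -
  define Y where "Y = {0..<n} - X"
  have "finite X" using assms finite_subset by blast
  then have Y: "finite Y" "card Y = n - card X"
    using assms by (auto simp: Y_def card_Diff_subset)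
  let ?A = "block_triples B \<inter> Y \<times> Y \<times> Y"
  let ?R = "{(x, y, z) \<in> block_triples B. x \<in> Y \<and> z \<in> X}"
  have "(SIGMA x:Y. Y - {x}) \<subseteq> (\<lambda>(x, y, z). (x, y)) ` (?A \<union> ?R)"
  proof
    fix p assume "p \<in> (SIGMA x:Y. Y - {x})"
    then obtain x y where "p = (x, y)" "x \<in> Y" "y \<in> Y" "y \<noteq> x" by blast
    moreover from this obtain z where "(x, y, z) \<in> block_triples B"
      using block_triples_exists by (auto simp: Y_def)
    moreover from this have "z \<in> X \<or> z \<in> Y"
      using block_triples_range by (auto simp: Y_def)
    ultimately show "p \<in> (\<lambda>(x, y, z). (x, y)) ` (?A \<union> ?R)"
      by force
  qed
  moreover have "finite (?A \<union> ?R)"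
    by (rule finite_subset[OF _ finite_block_triples]) auto
  ultimately have "card (SIGMA x:Y. Y - {x}) \<le> card ?A + card ?R"
    by (meson card_Un_le card_image_le card_mono finite_imageI le_trans)
  moreover have "card (SIGMA x:Y. Y - {x}) = (n - card X) * (n - card X - 1)"
    using Y by (simp add: card_SigmaI)
  moreover have "card ?R \<le> (n - card X) * card X"
    using card_block_triples_first_third[OF Y(1) \<open>finite X\<close>] Y(2) by simp
  moreover have "{C \<in> classes. support C \<subseteq> Y} = {C \<in> classes. support C \<inter> X = {}}"
    using support_classes(2) by (auto simp: Y_def)
  then have "card ?A \<le> 3 * card {C \<in> classes. support C \<inter> X = {}}"
    using card_block_triples_within[of Y] by simp
  moreover have "(n - card X) * (n - card X - 1) - (n - card X) * card X
      = (n - card X) * (n - 2 * card X - 1)"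
  proof -
    have "n - card X - 1 - card X = n - 2 * card X - 1" by arith
    then show ?thesis by (metis diff_mult_distrib2)
  qed
  ultimately show ?thesis by linarith
qed

definition packings :: "nat \<Rightarrow> (nat \<times> nat \<times> nat) set list set" where
  "packings k = {cs. length cs = k \<and> packing cs}"

lemma finite_packings: "finite (packings k)"
proof (rule finite_subset)
  show "packings k \<subseteq> {cs. set cs \<subseteq> classes \<and> length cs = k}"
    using packing_props(4) by (auto simp: packings_def)
qed (rule finite_lists_length_eq[OF finite_classes])

lemma packings_Suc:
  "packings (Suc k) = (\<lambda>(cs, C). C # cs) `
     (SIGMA cs:packings k. {C \<in> classes. support C \<inter> covered cs = {}})"
  by (auto simp: packings_def length_Suc_conv)

lemma card_packings_ge: "(\<Prod>i<k. (n - 3 * i) * (n - 6 * i - 1)) \<le> 3 ^ k * card (packings k)"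
proof (induction k)
  case 0
  have "packings 0 = {[]}" by (auto simp: packings_def)
  then show ?case by simp
next
  case (Suc k)
  let ?F = "\<lambda>cs. {C \<in> classes. support C \<inter> covered cs = {}}"
  let ?c = "(n - 3 * k) * (n - 6 * k - 1)"
  have "inj_on (\<lambda>(cs, C). C # cs) (SIGMA cs:packings k. ?F cs)"
    by (auto simp: inj_on_def)
  then have card_Suc: "card (packings (Suc k)) = (\<Sum>cs\<in>packings k. card (?F cs))"
    unfolding packings_Suc using finite_packings finite_classes
    by (simp add: card_image card_SigmaI)
  have avoiding: "?c \<le> 3 * card (?F cs)" if "cs \<in> packings k" for cs
    using card_classes_avoiding[of "covered cs"] packing_props[of cs] that
    by (simp add: packings_def)
  have "card (packings k) * ?c \<le> 3 * card (packings (Suc k))"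
    using sum_bounded_below[of "packings k" ?c "\<lambda>cs. 3 * card (?F cs)"] avoiding
    by (simp add: card_Suc sum_distrib_left)
  have "(\<Prod>i<Suc k. (n - 3 * i) * (n - 6 * i - 1)) = (\<Prod>i<k. (n - 3 * i) * (n - 6 * i - 1)) * ?c"
    by simp
  also have "\<dots> \<le> (3 ^ k * card (packings k)) * ?c"
    using Suc.IH by (rule mult_le_mono1)
  also have "\<dots> = 3 ^ k * (card (packings k) * ?c)"
    by (rule mult.assoc)
  also have "\<dots> \<le> 3 ^ Suc k * card (packings (Suc k))"
    using \<open>card (packings k) * ?c \<le> 3 * card (packings (Suc k))\<close> by simp
  finally show ?case .
qed

text \<open>A transversal determines the set of its classes, so it comes from at most \<open>k!\<close> packings.\<close>

lemma card_packings_le: "card (packings k) \<le> fact k * card (transversal_of ` packings k)"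
proof -
  have fibre: "card {cs \<in> packings k. transversal_of cs = T} \<le> fact k"
    if T: "T \<in> transversal_of ` packings k" for T
  proof -
    obtain cs0 where cs0: "cs0 \<in> packings k" "T = transversal_of cs0" using T by blast
    have "{cs \<in> packings k. transversal_of cs = T} \<subseteq> permutations_of_set (set cs0)"
    proof
      fix cs assume "cs \<in> {cs \<in> packings k. transversal_of cs = T}"
      then have "packing cs" "transversal_of cs = transversal_of cs0"
        using cs0 by (simp_all add: packings_def)
      moreover have "packing cs0"
        using cs0(1) by (simp add: packings_def)
      ultimately have "set cs = set cs0"
        by (intro set_eq_if_transversal_of_eq)
      then show "cs \<in> permutations_of_set (set cs0)"
        using packing_props(3)[OF \<open>packing cs\<close>] by (simp add: permutations_of_set_def)
    qed
    then have "card {cs \<in> packings k. transversal_of cs = T} \<le> card (permutations_of_set (set cs0))"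
      by (rule card_mono[rotated]) simp
    also have "\<dots> = fact (card (set cs0))"
      by simp
    also have "card (set cs0) = k"
      using cs0(1) packing_props(3) by (simp add: packings_def distinct_card)
    finally show ?thesis .
  qed
  let ?I = "transversal_of ` packings k"
  have "card (packings k) = card (\<Union>T\<in>?I. {cs \<in> packings k. transversal_of cs = T})"
    by (rule arg_cong[where f = card]) blast
  also have "\<dots> \<le> (\<Sum>T\<in>?I. card {cs \<in> packings k. transversal_of cs = T})"
    by (rule card_UN_le) (simp add: finite_packings)
  also have "\<dots> \<le> (\<Sum>T\<in>?I. fact k)"
    by (rule sum_mono) (rule fibre)
  finally show ?thesis by (simp add: mult.commute)
qed

lemma prod_le_num_transversals:
  "(\<Prod>i<k. (n - 3 * i) * (n - 6 * i - 1))
     \<le> 3 ^ k * fact k * num_transversals n (steiner_latin_square n B)"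
proof -
  let ?S = "steiner_latin_square n B"
  have "finite ?S"
    unfolding steiner_latin_square_eq using finite_block_triples by simp
  then have "finite {T. transversal n ?S T}"
    by (rule finite_subset[rotated, OF finite_Pow_iff[THEN iffD2]]) (auto simp: transversal_def)
  moreover have "transversal_of ` packings k \<subseteq> {T. transversal n ?S T}"
    using transversal_transversal_of by (auto simp: packings_def)
  ultimately have "card (transversal_of ` packings k) \<le> num_transversals n ?S"
    unfolding num_transversals_def by (rule card_mono)
  then have "card (packings k) \<le> fact k * num_transversals n ?S"
    using card_packings_le[of k] by (meson le_trans mult_le_mono2)
  then have "3 ^ k * card (packings k) \<le> 3 ^ k * (fact k * num_transversals n ?S)"
    by (rule mult_le_mono2)
  with card_packings_ge[of k] show ?thesis
    by (simp only: mult.assoc)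
qed

lemma fact_mult_le_num_transversals:
  assumes "6 * j + 1 \<le> n"
  shows "6 ^ j * fact (n div 3) \<le> fact (n div 3 - j) * num_transversals n (steiner_latin_square n B)"
proof -
  let ?t = "num_transversals n (steiner_latin_square n B)"
  have "(18::nat) ^ j = 3 ^ j * 6 ^ j"
    by (simp flip: power_mult_distrib)
  then have "(3 ^ j * fact j) * (6 ^ j * fact (n div 3)) = 18 ^ j * fact j * (fact (n div 3) :: nat)"
    by (simp add: mult_ac)
  also have "\<dots> \<le> (\<Prod>i<j. (n - 3 * i) * (n - 6 * i - 1)) * fact (n div 3 - j)"
    using prod_ge_fact_ratio[OF assms] .
  also have "\<dots> \<le> (3 ^ j * fact j) * (fact (n div 3 - j) * ?t)"
    using prod_le_num_transversals[of j] by (simp add: mult_ac)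
  finally show ?thesis by simp
qed

end

theorem theorem1:
  fixes n :: nat and S :: "(nat \<times> nat \<times> nat) set"
  assumes "n \<ge> 3"
    and "n mod 6 = 1 \<or> n mod 6 = 3"
    and "is_steiner_latin_square n S"
  shows "real (num_transversals n S) \<ge>
    (let m = nat \<lceil>(real n - 1) / 6\<rceil> in
       6 ^ (m - 1) * fact (n div 3) / (fact m * real m))"
proof -
  obtain B where B: "steiner_triple_system n B" "S = steiner_latin_square n B"
    using assms(3) unfolding is_steiner_latin_square_def by blast
  interpret steiner_system n B by (rule steiner_system.intro[OF B(1)])
  note m = ceiling_sixth_eq[OF assms(1,2)]
  have "6 ^ (n div 6) * fact (n div 3) \<le> fact (n div 3 - n div 6) * num_transversals n S"
    unfolding B(2) using m(4) by (rule fact_mult_le_num_transversals)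
  then show ?thesis
    unfolding Let_def m(1) using m(2,3) by (rule power_fact_div_le)
qed

end
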